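(* Let $\varphi:\mathbb{D}\to\mathbb{D}$ be an inner function with $\varphi(0)=p\neq0$, let $(r_n)$ be a sequence with $0<r_n<1$ and $r_n\to1$, and put $w_n=-\frac{p}{|p|}r_n$. Then, with $C_\varphi$ acting on $H^2(\mathbb{D})$, $$\lim_{n\to\infty}\frac{\|C_\varphi\kappa_{\alpha_p(w_n)}\|}{\|\kappa_{\alpha_p(w_n)}\|}=\sqrt{\frac{1+|p|}{1-|p|}}=\|C_\varphi\|\quad\text{and}\quad\lim_{n\to\infty}\frac{\|C_\varphi\kappa_{w_n}\|}{\|\kappa_{w_n}\|}=\sqrt{\frac{1-|p|}{1+|p|}}.$$
   Context: $\mathbb{D}$ is the open unit disc; $H^2(\mathbb{D})$ is the Hardy space of holomorphic $f(z)=\sum a_nz^n$ with $\|f\|^2=\sum|a_n|^2<\infty$; $\kappa_w(z)=\frac{1}{1-\overline{w}z}$ is its reproducing kernel at $w\in\mathbb{D}$. An inner function is a holomorphic self-map of $\mathbb{D}$ whose radial limits have modulus $1$ a.e. on the unit circle. $C_\varphi f=f\circ\varphi$, and $\alpha_p(z)=\frac{p-z}{1-\overline{p}z}$ for $p\in\mathbb{D}$. *)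

theory Defs
  imports "HOL-Complex_Analysis.Complex_Analysis"
begin

definition taylor_coeff :: "(complex \<Rightarrow> complex) \<Rightarrow> nat \<Rightarrow> complex" where
  "taylor_coeff f n = (deriv ^^ n) f 0 / of_nat (fact n)"

definition in_H2 :: "(complex \<Rightarrow> complex) \<Rightarrow> bool" where
  "in_H2 f \<longleftrightarrow> f holomorphic_on ball 0 1 \<and> summable (\<lambda>n. (norm (taylor_coeff f n))^2)"

definition H2_norm :: "(complex \<Rightarrow> complex) \<Rightarrow> real" where
  "H2_norm f = sqrt (\<Sum>n. (norm (taylor_coeff f n))^2)"

definition kernel :: "complex \<Rightarrow> complex \<Rightarrow> complex" where
  "kernel w z = 1 / (1 - cnj w * z)"

definition disc_aut :: "complex \<Rightarrow> complex \<Rightarrow> complex" where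
  "disc_aut p z = (p - z) / (1 - cnj p * z)"

definition comp_op :: "(complex \<Rightarrow> complex) \<Rightarrow> (complex \<Rightarrow> complex) \<Rightarrow> (complex \<Rightarrow> complex)" where
  "comp_op \<phi> f = f \<circ> \<phi>"

definition comp_op_norm :: "(complex \<Rightarrow> complex) \<Rightarrow> real" where
  "comp_op_norm \<phi> = Sup {H2_norm (comp_op \<phi> f) | f. in_H2 f \<and> H2_norm f \<le> 1}"

definition inner_function :: "(complex \<Rightarrow> complex) \<Rightarrow> bool" where
  "inner_function \<phi> \<longleftrightarrow> \<phi> holomorphic_on ball 0 1 \<and> \<phi> ` ball 0 1 \<subseteq> ball 0 1 \<and>
     (AE t in lborel. t \<in> {0..2*pi} \<longrightarrow>
        (\<exists>L. ((\<lambda>r. \<phi> (complex_of_real r * cis t)) \<longlongrightarrow> L) (at_left 1) \<and> norm L = 1))"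

end

theory Submission
  imports Defs
begin

text \<open>
  Let \<open>\<phi>\<close> be inner with \<open>\<phi> 0 = p\<close>. Since the boundary values of \<open>\<phi>\<close> have unit modulus,
  for \<open>F\<close> continuous on the closed disc the squared \<open>H\<^sup>2\<close> norm of \<open>F \<circ> \<phi>\<close> only depends on
  \<open>|F|\<^sup>2\<close> on the unit circle; if that boundary function is \<open>H + cnj K\<close> with \<open>H\<close>, \<open>K\<close>
  holomorphic, the mean value property evaluates the norm as \<open>H p + cnj (K p)\<close>.

  For the reproducing kernel \<open>k\<^sub>w\<close> this gives
  \<open>\<parallel>k\<^sub>w \<circ> \<phi>\<parallel>\<^sup>2 = (1 - |w|\<^sup>2|p|\<^sup>2) / ((1 - |w|\<^sup>2) |1 - w\<^sup>* p|\<^sup>2)\<close>, so along the radius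
  \<open>w = t p/|p|\<close> the quotient \<open>\<parallel>k\<^sub>w \<circ> \<phi>\<parallel>/\<parallel>k\<^sub>w\<parallel>\<close> is \<open>\<surd>((1 + t|p|)/(1 - t|p|))\<close>; the two
  sequences of the theorem let \<open>t\<close> tend to \<open>1\<close> and to \<open>-1\<close>.

  For a polynomial \<open>F = \<Sum> a\<^sub>n u\<^sup>n\<close> the same computation gives
  \<open>\<parallel>F \<circ> \<phi>\<parallel>\<^sup>2 = \<Sum> a\<^sub>n a\<^sub>m\<^sup>* c\<^sub>n\<^sub>m\<close> with \<open>|c\<^sub>n\<^sub>m| = |p|\<^bsup>|n-m|\<^esup>\<close>, and Schur's test for this
  Toeplitz matrix bounds it by \<open>(1 + |p|)/(1 - |p|) \<Sum> |a\<^sub>n|\<^sup>2\<close>. Approximating a general \<open>f\<close> by its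
  Taylor polynomials on circles of radius \<open>< 1\<close> extends the bound to all of \<open>H\<^sup>2\<close>, so the first
  limit is the operator norm.
\<close>

section \<open>Integrals over circles\<close>

lemma integral_bounded_convergence_AE:
  fixes F :: "nat \<Rightarrow> real \<Rightarrow> complex" and G :: "real \<Rightarrow> complex"
  assumes F: "\<And>k. continuous_on {a..b} (F k)" and G: "continuous_on {a..b} G"
    and bound: "\<And>k t. t \<in> {a..b} \<Longrightarrow> norm (F k t) \<le> B"
    and lim: "AE t in lborel. t \<in> {a..b} \<longrightarrow> (\<lambda>k. F k t) \<longlonglongrightarrow> G t"
  shows "(\<lambda>k. integral {a..b} (F k)) \<longlonglongrightarrow> integral {a..b} G"
proof -
  have integrable: "integrable lborel (\<lambda>t. indicator {a..b} t *\<^sub>R f t)"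
    if "continuous_on {a..b} f" for f :: "real \<Rightarrow> complex"
    using that by (rule borel_integrable_compact[OF compact_Icc])
  have "(\<lambda>k. LINT t:{a..b}|lborel. F k t) \<longlonglongrightarrow> (LINT t:{a..b}|lborel. G t)"
    unfolding set_lebesgue_integral_def
  proof (rule integral_dominated_convergence[where w="\<lambda>t. indicator {a..b} t *\<^sub>R B"])
    show "integrable lborel (\<lambda>t. indicator {a..b} t *\<^sub>R B)"
      by (rule borel_integrable_compact) (auto intro: continuous_intros)
    show "AE t in lborel.
        (\<lambda>k. indicator {a..b} t *\<^sub>R F k t) \<longlonglongrightarrow> indicator {a..b} t *\<^sub>R G t"
      using lim by eventually_elim (auto simp: indicator_def)
    show "AE t in lborel. norm (indicator {a..b} t *\<^sub>R F k t) \<le> indicator {a..b} t *\<^sub>R B" for k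
      using bound by (auto simp: indicator_def)
  qed (use integrable[OF G] integrable[OF F] in \<open>auto intro: borel_measurable_integrable\<close>)
  moreover have "(LINT t:{a..b}|lborel. f t) = integral {a..b} f"
    if "continuous_on {a..b} f" for f :: "real \<Rightarrow> complex"
    using integrable[OF that] by (intro set_borel_integral_eq_integral) (simp add: set_integrable_def)
  ultimately show ?thesis using F G by simp
qed

lemma integral_cis_diff:
  fixes n m :: nat
  shows "integral {0..2*pi} (\<lambda>t. cis ((real n - real m) * t)) = (if n = m then 2*pi else 0)"
proof (cases "n = m")
  case False
  define k where "k = real n - real m"
  have k: "k \<in> \<int>" "k \<noteq> 0" using False by (auto simp: k_def)
  have "((\<lambda>t. cis (k * t) / (\<i> * of_real k)) has_vector_derivative cis (k * t))
      (at t within {0..2*pi})" for t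
    unfolding has_vector_derivative_def using k
    by (auto intro!: derivative_eq_intros simp: scaleR_conv_of_real field_simps)
  then have "((\<lambda>t. cis (k * t)) has_integral
      cis (k * (2*pi)) / (\<i> * of_real k) - cis (k * 0) / (\<i> * of_real k)) {0..2*pi}"
    by (intro fundamental_theorem_of_calculus) auto
  moreover have "cis (k * (2*pi)) = 1"
    using cis_multiple_2pi[OF k(1)] by (simp add: mult.commute)
  ultimately show ?thesis using False by (simp add: k_def integral_unique)
qed (simp add: scaleR_conv_of_real)

lemma integral_trig_poly_norm_square:
  "integral {0..2*pi} (\<lambda>t. (\<Sum>n<N. c n * cis (real n * t)) * cnj (\<Sum>n<N. c n * cis (real n * t)))
     = of_real (2*pi * (\<Sum>n<N. norm (c n) ^ 2))"
proof -
  have product: "(\<Sum>n<N. c n * cis (real n * t)) * cnj (\<Sum>n<N. c n * cis (real n * t))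
      = (\<Sum>n<N. \<Sum>m<N. c n * cnj (c m) * cis ((real n - real m) * t))" for t
    unfolding cnj_sum sum_product
    by (intro sum.cong refl) (simp add: cis_cnj cis_mult algebra_simps)
  have "integral {0..2*pi} (\<lambda>t. \<Sum>n<N. \<Sum>m<N. c n * cnj (c m) * cis ((real n - real m) * t))
      = (\<Sum>n<N. \<Sum>m<N. c n * cnj (c m) * integral {0..2*pi} (\<lambda>t. cis ((real n - real m) * t)))"
    by (simp add: integral_sum integrable_sum integrable_continuous_interval continuous_intros)
  also have "\<dots> = (\<Sum>n<N. c n * cnj (c n) * (2*pi))"
    by (simp add: integral_cis_diff if_distrib sum.If_cases cong: if_cong)
  also have "\<dots> = of_real (2*pi * (\<Sum>n<N. norm (c n) ^ 2))"
    by (simp add: sum_distrib_left mult.commute flip: complex_norm_square)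
  finally show ?thesis unfolding product .
qed

definition circle_integral :: "(complex \<Rightarrow> complex) \<Rightarrow> real \<Rightarrow> complex" where
  "circle_integral f r = integral {0..2*pi} (\<lambda>t. f (of_real r * cis t))"

lemma continuous_on_circle:
  fixes f :: "complex \<Rightarrow> complex"
  assumes "continuous_on (ball 0 1) f" "0 \<le> r" "r < 1"
  shows "continuous_on {0..2*pi} (\<lambda>t. f (of_real r * cis t))"
  by (rule continuous_on_compose2[OF assms(1)])
     (use assms(2,3) in \<open>auto intro!: continuous_intros simp: norm_mult\<close>)

lemma circle_integral_add:
  fixes f g :: "complex \<Rightarrow> complex"
  assumes "continuous_on (ball 0 1) f" "continuous_on (ball 0 1) g" "0 \<le> r" "r < 1"
  shows "circle_integral (\<lambda>z. f z + g z) r = circle_integral f r + circle_integral g r"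
  unfolding circle_integral_def using assms
  by (intro integral_add integrable_continuous_interval continuous_on_circle)

lemma circle_integral_cnj: "circle_integral (\<lambda>z. cnj (f z)) r = cnj (circle_integral f r)"
  by (simp add: circle_integral_def integral_cnj)

lemma circle_integral_mean_value:
  fixes f :: "complex \<Rightarrow> complex"
  assumes "f holomorphic_on ball 0 1" "0 \<le> r" "r < 1"
  shows "circle_integral f r = of_real (2 * pi) * f 0"
proof (cases "r = 0")
  case False
  have "((\<lambda>u. f u / (u - 0)) has_contour_integral 2 * of_real pi * \<i> * f 0) (circlepath 0 r)"
    using assms False by (intro Cauchy_integral_circlepath_simple holomorphic_on_subset[OF assms(1)]) auto
  then have "2 * of_real pi * \<i> * f 0 = contour_integral (part_circlepath 0 r 0 (2*pi)) (\<lambda>u. f u / u)"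
    unfolding circlepath_def by (simp add: contour_integral_unique)
  also have "\<dots> = integral {0..2*pi}
      (\<lambda>t. f (of_real r * cis t) / (of_real r * cis t) * of_real r * \<i> * cis t)"
    by (simp add: contour_integral_part_circlepath_eq)
  also have "\<dots> = \<i> * circle_integral f r"
    unfolding circle_integral_def using False by (simp add: field_simps flip: integral_mult_right)
  finally show ?thesis by (simp add: field_simps)
qed (simp add: circle_integral_def scaleR_conv_of_real)

lemma circle_integral_harmonic_mean_value:
  fixes H K :: "complex \<Rightarrow> complex"
  assumes "H holomorphic_on ball 0 1" "K holomorphic_on ball 0 1" "0 \<le> r" "r < 1"
  shows "circle_integral (\<lambda>z. H z + cnj (K z)) r = of_real (2 * pi) * (H 0 + cnj (K 0))"
  using assms
  by (simp add: circle_integral_add circle_integral_cnj circle_integral_mean_value distrib_left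
      holomorphic_on_imp_continuous_on continuous_on_cnj)

section \<open>Taylor coefficients and the \<open>H\<^sup>2\<close> norm\<close>

lemma taylor_coeff_sums:
  assumes "f holomorphic_on ball 0 1" "norm z < 1"
  shows "(\<lambda>n. taylor_coeff f n * z ^ n) sums f z"
  using holomorphic_power_series[OF assms(1), of z] assms(2) by (simp add: taylor_coeff_def)

lemma summable_norm_taylor_coeff:
  assumes "f holomorphic_on ball 0 1" "0 \<le> r" "r < 1"
  shows "summable (\<lambda>n. norm (taylor_coeff f n) * r ^ n)"
proof -
  have "norm (complex_of_real ((1 + r) / 2)) < 1"
    by (subst norm_of_real) (use assms in simp)
  then have "summable (\<lambda>n. taylor_coeff f n * of_real ((1 + r) / 2) ^ n)"
    by (rule sums_summable[OF taylor_coeff_sums[OF assms(1)]])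
  moreover have "norm (complex_of_real r) < norm (complex_of_real ((1 + r) / 2))"
    by (simp only: norm_of_real) (use assms in simp)
  ultimately have "summable (\<lambda>n. norm (taylor_coeff f n * of_real r ^ n))"
    by (rule powser_insidea)
  then show ?thesis using assms by (simp add: norm_mult norm_power)
qed

lemma norm_taylor_partial_sum_le:
  assumes f: "f holomorphic_on ball 0 1" and u: "norm u \<le> \<rho>" and \<rho>: "\<rho> < 1"
  shows "norm (\<Sum>n<N. taylor_coeff f n * u ^ n) \<le> (\<Sum>n. norm (taylor_coeff f n) * \<rho> ^ n)"
proof -
  have "norm (\<Sum>n<N. taylor_coeff f n * u ^ n) \<le> (\<Sum>n<N. norm (taylor_coeff f n) * \<rho> ^ n)"
    using u by (intro order_trans[OF norm_sum] sum_mono)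
      (auto simp: norm_mult norm_power intro!: mult_left_mono power_mono)
  also have "\<dots> \<le> (\<Sum>n. norm (taylor_coeff f n) * \<rho> ^ n)"
    using order_trans[OF norm_ge_zero u] \<rho>
    by (intro sum_le_suminf summable_norm_taylor_coeff[OF f]) auto
  finally show ?thesis .
qed

lemma summable_norm_taylor_coeff_square:
  assumes hol: "f holomorphic_on ball 0 1" and r: "0 \<le> r" "r < 1"
  shows "summable (\<lambda>n. norm (taylor_coeff f n) ^ 2 * r ^ (2*n))"
proof -
  define b where "b n = norm (taylor_coeff f n) * r ^ n" for n
  have b: "summable b" "\<And>n. 0 \<le> b n"
    using summable_norm_taylor_coeff[OF hol r] r by (auto simp: b_def[abs_def])
  have "b n \<le> suminf b" for n
    using sum_le_suminf[OF b(1), of "{n}"] b(2) by auto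
  then have "b n ^ 2 \<le> suminf b * b n" for n
    using b(2) by (auto simp: power2_eq_square intro!: mult_right_mono)
  then have "summable (\<lambda>n. b n ^ 2)"
    using b(2) by (intro summable_comparison_test[OF _ summable_mult[OF b(1), of "suminf b"]]) auto
  then show ?thesis
    by (simp add: b_def power_mult_distrib power_mult mult.commute[of 2])
qed

lemma circle_integral_norm_square:
  fixes f :: "complex \<Rightarrow> complex"
  assumes hol: "f holomorphic_on ball 0 1" and r: "0 \<le> r" "r < 1"
  shows "circle_integral (\<lambda>z. f z * cnj (f z)) r
           = of_real (2*pi * (\<Sum>n. norm (taylor_coeff f n) ^ 2 * r ^ (2*n)))"
proof -
  define c where "c n = taylor_coeff f n * of_real (r ^ n)" for n
  have norm_c2: "norm (c n) ^ 2 = norm (taylor_coeff f n) ^ 2 * r ^ (2*n)" for n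
    using r by (simp add: c_def norm_mult norm_power power_mult_distrib power_mult mult.commute[of 2])
  define A where "A = (\<Sum>n. norm (taylor_coeff f n) * r ^ n)"
  define S where "S N t = (\<Sum>n<N. taylor_coeff f n * (of_real r * cis t) ^ n)" for N t
  have S_trig: "S N t = (\<Sum>n<N. c n * cis (real n * t))" for N t
    by (simp add: S_def c_def power_mult_distrib mult.assoc Complex.DeMoivre)
  have S_bound: "norm (S N t) \<le> A" for N t
    unfolding S_def A_def using r by (intro norm_taylor_partial_sum_le[OF hol]) (auto simp: norm_mult)
  have "(\<lambda>N. integral {0..2*pi} (\<lambda>t. S N t * cnj (S N t)))
      \<longlonglongrightarrow> circle_integral (\<lambda>z. f z * cnj (f z)) r"
    unfolding circle_integral_def
  proof (rule integral_bounded_convergence_AE[where B="A * A"])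
    show "continuous_on {0..2*pi} (\<lambda>t. S N t * cnj (S N t))" for N
      unfolding S_def by (intro continuous_intros)
    show "continuous_on {0..2*pi} (\<lambda>t. f (of_real r * cis t) * cnj (f (of_real r * cis t)))"
      using continuous_on_circle[OF holomorphic_on_imp_continuous_on[OF hol] r]
      by (intro continuous_intros)
    show "norm (S N t * cnj (S N t)) \<le> A * A" for N t
      unfolding norm_mult complex_mod_cnj
      by (intro mult_mono S_bound) (auto intro: order_trans[OF norm_ge_zero S_bound])
    have "(\<lambda>N. S N t) \<longlonglongrightarrow> f (of_real r * cis t)" for t
      using taylor_coeff_sums[OF hol, of "of_real r * cis t"] r by (simp add: S_def sums_def norm_mult)
    then show "AE t in lborel. t \<in> {0..2*pi} \<longrightarrow>
        (\<lambda>N. S N t * cnj (S N t)) \<longlonglongrightarrow> f (of_real r * cis t) * cnj (f (of_real r * cis t))"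
      by (intro AE_I2 impI tendsto_intros)
  qed
  moreover have "(\<lambda>N. integral {0..2*pi} (\<lambda>t. S N t * cnj (S N t)))
      \<longlonglongrightarrow> of_real (2*pi * (\<Sum>n. norm (taylor_coeff f n) ^ 2 * r ^ (2*n)))"
    unfolding S_trig integral_trig_poly_norm_square norm_c2
    by (intro tendsto_intros summable_LIMSEQ summable_norm_taylor_coeff_square[OF hol r])
  ultimately show ?thesis
    by (rule LIMSEQ_unique)
qed

lemma tendsto_power_series_at_left_1:
  fixes c :: "nat \<Rightarrow> real"
  assumes "\<And>n. 0 \<le> c n" "summable c"
  shows "((\<lambda>x. \<Sum>n. c n * x ^ (2*n)) \<longlongrightarrow> (\<Sum>n. c n)) (at_left 1)"
proof -
  have "uniform_limit {0..1} (\<lambda>N x. \<Sum>n<N. c n * x ^ (2*n)) (\<lambda>x. \<Sum>n. c n * x ^ (2*n)) sequentially"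
    by (rule Weierstrass_m_test[where M=c])
       (use assms in \<open>auto simp: abs_mult intro!: mult_left_le power_le_one\<close>)
  then have "continuous_on {0..1} (\<lambda>x. \<Sum>n. c n * x ^ (2*n))"
    by (rule uniform_limit_theorem[rotated]) (auto intro!: always_eventually continuous_intros)
  from continuous_on_Icc_at_leftD[OF this] show ?thesis by simp
qed

lemma H2_norm_nonneg: "in_H2 f \<Longrightarrow> 0 \<le> H2_norm f"
  unfolding H2_norm_def in_H2_def by (auto intro!: suminf_nonneg)

lemma H2_norm_square: "in_H2 f \<Longrightarrow> H2_norm f ^ 2 = (\<Sum>n. norm (taylor_coeff f n) ^ 2)"
  unfolding H2_norm_def in_H2_def by (auto intro!: suminf_nonneg)

lemma in_H2_of_circle_bound:
  assumes hol: "f holomorphic_on ball 0 1"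
    and bound: "\<And>r. 0 < r \<Longrightarrow> r < 1 \<Longrightarrow>
      (\<Sum>n. norm (taylor_coeff f n) ^ 2 * r ^ (2*n)) \<le> M"
  shows "in_H2 f" and "H2_norm f ^ 2 \<le> M"
proof -
  define c where "c n = norm (taylor_coeff f n) ^ 2" for n
  have partial: "(\<Sum>n<N. c n) \<le> M" for N
  proof -
    have "((\<lambda>r. \<Sum>n<N. c n * r ^ (2*n)) \<longlongrightarrow> (\<Sum>n<N. c n * 1 ^ (2*n))) (at_left 1)"
      by (intro tendsto_intros)
    moreover have "\<forall>\<^sub>F r in at_left 1. (\<Sum>n<N. c n * r ^ (2*n)) \<le> M"
      using eventually_at_left_real[OF zero_less_one]
    proof eventually_elim
      case (elim r)
      then have "(\<Sum>n<N. c n * r ^ (2*n)) \<le> (\<Sum>n. c n * r ^ (2*n))"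
        using summable_norm_taylor_coeff_square[OF hol, of r] by (intro sum_le_suminf) (auto simp: c_def)
      also have "\<dots> \<le> M" using elim by (auto simp: c_def intro: bound)
      finally show ?case .
    qed
    ultimately show ?thesis by (simp add: tendsto_upperbound)
  qed
  have "(\<Sum>n\<le>N. c n) \<le> M" for N
    using partial[of "Suc N"] by (simp add: lessThan_Suc_atMost)
  then have "summable c"
    by (intro bounded_imp_summable) (auto simp: c_def)
  then show "in_H2 f" using hol unfolding in_H2_def c_def by simp
  then show "H2_norm f ^ 2 \<le> M"
    using suminf_le_const[OF \<open>summable c\<close> partial] by (simp add: H2_norm_square c_def)
qed

lemma circle_integral_norm_square_tendsto:
  assumes "in_H2 f"
  shows "((\<lambda>r. circle_integral (\<lambda>z. f z * cnj (f z)) r) \<longlongrightarrow> of_real (2*pi * H2_norm f ^ 2))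
           (at_left 1)"
proof -
  have hol: "f holomorphic_on ball 0 1" and sf: "summable (\<lambda>n. norm (taylor_coeff f n) ^ 2)"
    using assms by (auto simp: in_H2_def)
  have "((\<lambda>r. complex_of_real (2*pi * (\<Sum>n. norm (taylor_coeff f n) ^ 2 * r ^ (2*n))))
      \<longlongrightarrow> complex_of_real (2*pi * H2_norm f ^ 2)) (at_left 1)"
    unfolding H2_norm_square[OF assms]
    by (intro tendsto_intros tendsto_power_series_at_left_1 sf) simp
  moreover have "\<forall>\<^sub>F r in at_left 1. of_real (2*pi * (\<Sum>n. norm (taylor_coeff f n) ^ 2 * r ^ (2*n)))
      = circle_integral (\<lambda>z. f z * cnj (f z)) r"
    using eventually_at_left_real[OF zero_less_one]
    by eventually_elim (simp add: circle_integral_norm_square[OF hol])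
  ultimately show ?thesis by (rule Lim_transform_eventually)
qed

lemma bounded_holomorphic_in_H2:
  assumes hol: "f holomorphic_on ball 0 1" and bound: "\<And>z. norm z < 1 \<Longrightarrow> norm (f z) \<le> B"
  shows "in_H2 f"
proof (rule in_H2_of_circle_bound[OF hol])
  fix r :: real assume r: "0 < r" "r < 1"
  have "0 \<le> (\<Sum>n. norm (taylor_coeff f n) ^ 2 * r ^ (2*n))"
    using r summable_norm_taylor_coeff_square[OF hol, of r] by (intro suminf_nonneg) auto
  then have "2*pi * (\<Sum>n. norm (taylor_coeff f n) ^ 2 * r ^ (2*n))
      = norm (circle_integral (\<lambda>z. f z * cnj (f z)) r)"
    using r by (simp only: circle_integral_norm_square[OF hol] norm_of_real) simp
  also have "\<dots> \<le> integral {0..2*pi} (\<lambda>t. B ^ 2)"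
    unfolding circle_integral_def
  proof (rule integral_norm_bound_integral)
    show "(\<lambda>t. f (of_real r * cis t) * cnj (f (of_real r * cis t))) integrable_on {0..2*pi}"
      using continuous_on_circle[OF holomorphic_on_imp_continuous_on[OF hol]] r
      by (auto intro!: integrable_continuous_interval continuous_intros)
    show "norm (f (of_real r * cis t) * cnj (f (of_real r * cis t))) \<le> B ^ 2" for t
      unfolding norm_mult complex_mod_cnj power2_eq_square
      using bound[of "of_real r * cis t"] r
      by (intro mult_mono) (auto simp: norm_mult intro: order_trans[OF norm_ge_zero])
  qed auto
  finally show "(\<Sum>n. norm (taylor_coeff f n) ^ 2 * r ^ (2*n)) \<le> B ^ 2" by simp
qed

section \<open>Composition with an inner function\<close>

lemma inner_functionD:
  assumes "inner_function \<phi>"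
  shows "\<phi> holomorphic_on ball 0 1" and "norm z < 1 \<Longrightarrow> norm (\<phi> z) < 1"
  using assms unfolding inner_function_def by (auto simp: image_subset_iff)

lemma inner_function_id: "inner_function (\<lambda>z. z)"
  unfolding inner_function_def
proof (intro conjI AE_I2 impI exI)
  show "((\<lambda>r. of_real r * cis t) \<longlongrightarrow> cis t) (at_left 1)" for t
    by (intro tendsto_eq_intros) auto
qed auto

lemma continuous_on_comp_inner:
  assumes "inner_function \<phi>" "continuous_on (cball 0 1) D"
  shows "continuous_on (ball 0 1) (D \<circ> \<phi>)"
proof (rule continuous_on_compose)
  show "continuous_on (ball 0 1) \<phi>"
    using inner_functionD(1)[OF assms(1)] by (rule holomorphic_on_imp_continuous_on)
  have "\<phi> ` ball 0 1 \<subseteq> cball 0 1"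
    using inner_functionD(2)[OF assms(1)] by (simp add: image_subset_iff less_imp_le)
  then show "continuous_on (\<phi> ` ball 0 1) D"
    by (rule continuous_on_subset[OF assms(2)])
qed

lemma holomorphic_on_comp_inner:
  assumes "inner_function \<phi>" "G holomorphic_on ball 0 1"
  shows "G \<circ> \<phi> holomorphic_on ball 0 1"
  using inner_functionD[OF assms(1)]
  by (intro holomorphic_on_compose_gen[OF _ assms(2)]) (auto simp: image_subset_iff)

lemma in_H2_comp_inner:
  assumes inner: "inner_function \<phi>"
    and F: "F holomorphic_on ball 0 1" "continuous_on (cball 0 1) F"
  shows "in_H2 (F \<circ> \<phi>)"
proof -
  obtain B where B: "\<And>u. u \<in> cball 0 1 \<Longrightarrow> norm (F u) \<le> B"
    using compact_imp_bounded[OF compact_continuous_image[OF F(2) compact_cball]]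
    by (meson bounded_iff imageI)
  have "norm ((F \<circ> \<phi>) z) \<le> B" if "norm z < 1" for z
    using B[of "\<phi> z"] inner_functionD(2)[OF inner that] by simp
  then show ?thesis
    by (rule bounded_holomorphic_in_H2[OF holomorphic_on_comp_inner[OF inner F(1)]])
qed

text \<open>This is the only place where the radial limits of an inner function are used.\<close>

lemma circle_integral_inner_tendsto_0:
  assumes inner: "inner_function \<phi>" and D: "continuous_on (cball 0 1) D"
    and boundary: "\<And>u. norm u = 1 \<Longrightarrow> D u = 0"
  shows "((\<lambda>r. circle_integral (D \<circ> \<phi>) r) \<longlongrightarrow> 0) (at_left 1)"
proof (rule tendsto_at_left_sequentially[OF zero_less_one])
  fix s :: "nat \<Rightarrow> real"
  assume s: "\<And>n. s n < 1" "\<And>n. 0 < s n" and "s \<longlonglongrightarrow> 1"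
  then have s_at_left: "filterlim s (at_left 1) sequentially"
    by (intro tendsto_imp_filterlim_at_left) (auto intro: always_eventually)
  have maps: "\<phi> (of_real (s k) * cis t) \<in> cball 0 1" for k t
    using inner_functionD(2)[OF inner, of "of_real (s k) * cis t"] s[of k] by (simp add: norm_mult)
  obtain M where M: "\<And>u. u \<in> cball 0 1 \<Longrightarrow> norm (D u) \<le> M"
    using compact_imp_bounded[OF compact_continuous_image[OF D compact_cball]]
    by (meson bounded_iff imageI)
  have "(\<lambda>k. integral {0..2*pi} (\<lambda>t. D (\<phi> (of_real (s k) * cis t))))
      \<longlonglongrightarrow> integral {0..2*pi} (\<lambda>t. 0)"
  proof (rule integral_bounded_convergence_AE[where B=M])
    show "continuous_on {0..2*pi} (\<lambda>t. D (\<phi> (of_real (s k) * cis t)))" for k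
      using continuous_on_circle[OF continuous_on_comp_inner[OF inner D], of "s k"] s[of k] by simp
    have "AE t in lborel. t \<in> {0..2*pi} \<longrightarrow>
        (\<exists>L. ((\<lambda>r. \<phi> (of_real r * cis t)) \<longlongrightarrow> L) (at_left 1) \<and> norm L = 1)"
      using inner by (simp add: inner_function_def)
    then show "AE t in lborel. t \<in> {0..2*pi} \<longrightarrow>
        (\<lambda>k. D (\<phi> (of_real (s k) * cis t))) \<longlonglongrightarrow> 0"
    proof eventually_elim
      case (elim t)
      show ?case
      proof
        assume "t \<in> {0..2*pi}"
        with elim obtain L where L: "((\<lambda>r. \<phi> (of_real r * cis t)) \<longlongrightarrow> L) (at_left 1)" "norm L = 1"
          by blast
        have "(\<lambda>k. D (\<phi> (of_real (s k) * cis t))) \<longlonglongrightarrow> D L"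
          using L maps
          by (intro continuous_on_tendsto_compose[OF D] filterlim_compose[OF L(1) s_at_left]) auto
        then show "(\<lambda>k. D (\<phi> (of_real (s k) * cis t))) \<longlonglongrightarrow> 0"
          using boundary[OF L(2)] by simp
      qed
    qed
  qed (use M maps in auto)
  then show "(\<lambda>k. circle_integral (D \<circ> \<phi>) (s k)) \<longlonglongrightarrow> 0"
    by (simp add: circle_integral_def)
qed

lemma H2_norm_comp_inner:
  fixes \<phi> F H K :: "complex \<Rightarrow> complex"
  assumes inner: "inner_function \<phi>"
    and F: "F holomorphic_on ball 0 1" "continuous_on (cball 0 1) F"
    and H: "H holomorphic_on ball 0 1" "continuous_on (cball 0 1) H"
    and K: "K holomorphic_on ball 0 1" "continuous_on (cball 0 1) K"
    and boundary: "\<And>u. norm u = 1 \<Longrightarrow> F u * cnj (F u) = H u + cnj (K u)"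
  shows "of_real (H2_norm (F \<circ> \<phi>) ^ 2) = H (\<phi> 0) + cnj (K (\<phi> 0))"
proof -
  define c where "c = of_real (2*pi) * (H (\<phi> 0) + cnj (K (\<phi> 0)))"
  define D where "D u = F u * cnj (F u) - (H u + cnj (K u))" for u
  have D: "continuous_on (cball 0 1) D"
    unfolding D_def using F(2) H(2) K(2) by (intro continuous_intros)
  have "((\<lambda>r. circle_integral (D \<circ> \<phi>) r + c) \<longlongrightarrow> 0 + c) (at_left 1)"
    using boundary by (intro tendsto_add tendsto_const circle_integral_inner_tendsto_0[OF inner D])
      (simp add: D_def)
  moreover have "\<forall>\<^sub>F r in at_left 1.
      circle_integral (D \<circ> \<phi>) r + c
        = circle_integral (\<lambda>z. (F \<circ> \<phi>) z * cnj ((F \<circ> \<phi>) z)) r"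
    using eventually_at_left_real[OF zero_less_one]
  proof eventually_elim
    case (elim r)
    have "circle_integral (\<lambda>z. H (\<phi> z) + cnj (K (\<phi> z))) r = c"
      using holomorphic_on_comp_inner[OF inner H(1)] holomorphic_on_comp_inner[OF inner K(1)] elim
      by (simp add: c_def o_def circle_integral_harmonic_mean_value)
    moreover have harmonic: "continuous_on (ball 0 1) (\<lambda>z. H (\<phi> z) + cnj (K (\<phi> z)))"
      using continuous_on_comp_inner[OF inner H(2)] continuous_on_comp_inner[OF inner K(2)]
      by (intro continuous_intros) (simp_all add: o_def)
    ultimately show ?case
      using circle_integral_add[OF continuous_on_comp_inner[OF inner D] harmonic, of r] elim
      by (simp add: D_def o_def)
  qed
  ultimately have
    "((\<lambda>r. circle_integral (\<lambda>z. (F \<circ> \<phi>) z * cnj ((F \<circ> \<phi>) z)) r) \<longlongrightarrow> c) (at_left 1)"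
    by (simp add: Lim_transform_eventually)
  with circle_integral_norm_square_tendsto[OF in_H2_comp_inner[OF inner F]]
  have "of_real (2*pi * H2_norm (F \<circ> \<phi>) ^ 2) = c"
    by (rule tendsto_unique[rotated 1]) simp
  then show ?thesis
    by (simp add: c_def)
qed

lemma Re_Cayley: "Re ((1 + a) / (1 - a)) = (1 - norm a ^ 2) / norm (1 - a) ^ 2"
  unfolding Re_divide cmod_power2 by (simp add: algebra_simps power2_eq_square)

lemma kernel_mult_cnj_unimodular:
  assumes w: "norm w < 1" and u: "norm u = 1"
  shows "kernel w u * cnj (kernel w u)
           = of_real (Re ((1 + cnj w * u) / (1 - cnj w * u)) / (1 - norm w ^ 2))"
proof -
  have a: "norm (cnj w * u) = norm w"
    using u by (simp add: norm_mult)
  then have "norm (1 - cnj w * u) \<noteq> 0"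
    using w by auto
  moreover have "1 - norm w ^ 2 \<noteq> 0"
    using w by (simp add: abs_square_eq_1)
  ultimately have Re_eq:
    "Re ((1 + cnj w * u) / (1 - cnj w * u)) / (1 - norm w ^ 2) = 1 / norm (1 - cnj w * u) ^ 2"
    unfolding Re_Cayley a by (simp add: field_simps)
  have "kernel w u * cnj (kernel w u) = of_real (1 / norm (1 - cnj w * u) ^ 2)"
    unfolding kernel_def of_real_divide of_real_1 complex_norm_square by simp
  then show ?thesis
    by (simp only: Re_eq)
qed

lemma H2_norm_kernel_comp_inner:
  assumes inner: "inner_function \<phi>" and w: "norm w < 1"
  shows "in_H2 (kernel w \<circ> \<phi>)"
    and "H2_norm (kernel w \<circ> \<phi>) ^ 2
           = (1 - norm w ^ 2 * norm (\<phi> 0) ^ 2) / ((1 - norm w ^ 2) * norm (1 - cnj w * \<phi> 0) ^ 2)"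
proof -
  have nz: "1 - cnj w * u \<noteq> 0" if "norm u \<le> 1" for u
  proof -
    have "norm (cnj w * u) < 1"
      using mult_left_le[OF that, of "norm w"] w by (simp add: norm_mult)
    then show ?thesis
      by auto
  qed
  define G where "G u = (1 + cnj w * u) / (1 - cnj w * u) / of_real (2 * (1 - norm w ^ 2))" for u
  have G_add_cnj: "G u + cnj (G u) = of_real (Re ((1 + cnj w * u) / (1 - cnj w * u)) / (1 - norm w ^ 2))"
    for u
  proof -
    have "Re (G u) = Re ((1 + cnj w * u) / (1 - cnj w * u)) / (2 * (1 - norm w ^ 2))"
      unfolding G_def by (rule Re_divide_of_real)
    moreover have "2 * (x / (2 * y)) = x / y" for x y :: real
      by simp
    ultimately have "2 * Re (G u) = Re ((1 + cnj w * u) / (1 - cnj w * u)) / (1 - norm w ^ 2)"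
      by (simp only:)
    then show ?thesis
      unfolding complex_add_cnj by (rule arg_cong)
  qed
  have "2 * (1 - norm w ^ 2) \<noteq> 0"
    using w by (simp add: abs_square_eq_1)
  then have "complex_of_real (2 * (1 - norm w ^ 2)) \<noteq> 0"
    unfolding of_real_eq_0_iff .
  then have G: "G holomorphic_on ball 0 1" "continuous_on (cball 0 1) G"
    using nz unfolding G_def by (auto intro!: holomorphic_intros continuous_intros simp del: of_real_mult)
  have kernel: "kernel w holomorphic_on ball 0 1" "continuous_on (cball 0 1) (kernel w)"
    using nz unfolding kernel_def by (auto intro!: holomorphic_intros continuous_intros)
  show "in_H2 (kernel w \<circ> \<phi>)"
    by (rule in_H2_comp_inner[OF inner kernel])
  have "of_real (H2_norm (kernel w \<circ> \<phi>) ^ 2) = G (\<phi> 0) + cnj (G (\<phi> 0))"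
    by (rule H2_norm_comp_inner[OF inner kernel G G]) (simp add: kernel_mult_cnj_unimodular[OF w] G_add_cnj)
  then show "H2_norm (kernel w \<circ> \<phi>) ^ 2
      = (1 - norm w ^ 2 * norm (\<phi> 0) ^ 2) / ((1 - norm w ^ 2) * norm (1 - cnj w * \<phi> 0) ^ 2)"
    unfolding G_add_cnj of_real_eq_iff Re_Cayley by (simp add: norm_mult power_mult_distrib)
qed

lemma H2_norm_kernel:
  assumes "norm w < 1"
  shows "in_H2 (kernel w)" and "H2_norm (kernel w) ^ 2 = 1 / (1 - norm w ^ 2)"
  using H2_norm_kernel_comp_inner[OF inner_function_id assms] by (simp_all add: o_def)

section \<open>The norm of the composition operator\<close>

lemma sum_power_inj_le:
  fixes q :: real
  assumes q: "0 \<le> q" "q < 1" and "finite A" "inj_on g A"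
  shows "(\<Sum>m\<in>A. q ^ g m) \<le> 1 / (1 - q)"
proof -
  have "(\<Sum>m\<in>A. q ^ g m) = (\<Sum>j\<in>g ` A. q ^ j)"
    using assms(4) by (simp add: sum.reindex)
  also have "\<dots> \<le> (\<Sum>j. q ^ j)"
    using assms(3) q by (intro sum_le_suminf summable_geometric) auto
  also have "\<dots> = 1 / (1 - q)"
    using q by (simp add: suminf_geometric)
  finally show ?thesis .
qed

lemma sum_power_dist_le:
  fixes q :: real
  assumes q: "0 \<le> q" "q < 1"
  shows "(\<Sum>m<N. q ^ (max n m - min n m)) \<le> (1 + q) / (1 - q)"
proof -
  have "(\<Sum>m<N. q ^ (max n m - min n m)) \<le> (\<Sum>m\<in>{..n} \<union> {n<..<N}. q ^ (max n m - min n m))"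
    using q by (intro sum_mono2) auto
  also have "\<dots> = (\<Sum>m\<le>n. q ^ (n - m)) + q * (\<Sum>m\<in>{n<..<N}. q ^ (m - Suc n))"
    by (subst sum.union_disjoint)
       (auto simp: sum_distrib_left Suc_diff_Suc intro!: sum.cong arg_cong2[where f="(+)"]
         simp flip: power_Suc)
  also have "\<dots> \<le> 1 / (1 - q) + q * (1 / (1 - q))"
    using q by (intro add_mono mult_left_mono sum_power_inj_le) (auto simp: inj_on_def)
  also have "\<dots> = (1 + q) / (1 - q)"
    by (simp add: add_divide_distrib)
  finally show ?thesis .
qed

lemma quadratic_form_power_dist_le:
  fixes q :: real and x :: "nat \<Rightarrow> real"
  assumes q: "0 \<le> q" "q < 1"
  shows "(\<Sum>n<N. \<Sum>m<N. x n * x m * q ^ (max n m - min n m)) \<le> (1 + q) / (1 - q) * (\<Sum>n<N. x n ^ 2)"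
proof -
  define d where "d n m = q ^ (max n m - min n m)" for n m
  have "(\<Sum>n<N. \<Sum>m<N. x n * x m * d n m) \<le> (\<Sum>n<N. \<Sum>m<N. (x n ^ 2 / 2 + x m ^ 2 / 2) * d n m)"
    using sum_squares_bound q
    by (intro sum_mono mult_right_mono) (auto simp: d_def power2_eq_square field_simps)
  also have "\<dots> = (\<Sum>n<N. \<Sum>m<N. x n ^ 2 / 2 * d n m) + (\<Sum>m<N. \<Sum>n<N. x m ^ 2 / 2 * d n m)"
    by (simp add: distrib_right sum.distrib) (rule sum.swap)
  also have "\<dots> = (\<Sum>n<N. x n ^ 2 * (\<Sum>m<N. d n m))"
    by (simp add: d_def max.commute min.commute sum_distrib_left flip: sum.distrib)
  also have "\<dots> \<le> (\<Sum>n<N. x n ^ 2 * ((1 + q) / (1 - q)))"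
    unfolding d_def by (intro sum_mono mult_left_mono sum_power_dist_le q) auto
  also have "\<dots> = (1 + q) / (1 - q) * (\<Sum>n<N. x n ^ 2)"
    by (simp add: sum_distrib_left mult.commute)
  finally show ?thesis
    by (simp add: d_def)
qed

lemma unimodular_power_mult_cnj_power:
  fixes u :: complex
  assumes "norm u = 1"
  shows "u ^ n * cnj u ^ m = (if m \<le> n then u ^ (n - m) else cnj u ^ (m - n))"
proof -
  have "u * cnj u = 1"
    using assms complex_norm_square[of u] by simp
  then have unit: "u ^ k * cnj u ^ k = 1" for k
    by (simp flip: power_mult_distrib)
  show ?thesis
  proof (cases "m \<le> n")
    case True
    then have "u ^ n * cnj u ^ m = u ^ (n - m) * (u ^ m * cnj u ^ m)"
      by (simp add: mult.assoc flip: power_add)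
    then show ?thesis using True unit by simp
  next
    case False
    then have "u ^ n * cnj u ^ m = (u ^ n * cnj u ^ n) * cnj u ^ (m - n)"
      by (simp add: mult.assoc flip: power_add)
    then show ?thesis using False unit by simp
  qed
qed

lemma H2_norm_poly_comp_inner_le:
  fixes a :: "nat \<Rightarrow> complex"
  assumes inner: "inner_function \<phi>"
  shows "in_H2 ((\<lambda>u. \<Sum>n<N. a n * u ^ n) \<circ> \<phi>)"
    and "H2_norm ((\<lambda>u. \<Sum>n<N. a n * u ^ n) \<circ> \<phi>) ^ 2
           \<le> (1 + norm (\<phi> 0)) / (1 - norm (\<phi> 0)) * (\<Sum>n<N. norm (a n) ^ 2)"
proof -
  define P where "P u = (\<Sum>n<N. a n * u ^ n)" for u
  define E where "E n m u = (if m \<le> n then u ^ (n - m) else cnj u ^ (m - n))" for n m u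
  define H where "H u = (\<Sum>n<N. \<Sum>m<N. (if m \<le> n then a n * cnj (a m) else 0) * u ^ (n - m))" for u
  define K where "K u = (\<Sum>n<N. \<Sum>m<N. (if m \<le> n then 0 else cnj (a n) * a m) * u ^ (m - n))" for u
  have H_add_cnj_K: "H u + cnj (K u) = (\<Sum>n<N. \<Sum>m<N. a n * cnj (a m) * E n m u)" for u
    unfolding H_def K_def cnj_sum sum.distrib[symmetric] by (intro sum.cong refl) (simp add: E_def)
  have poly: "H holomorphic_on ball 0 1" "continuous_on (cball 0 1) H"
    "K holomorphic_on ball 0 1" "continuous_on (cball 0 1) K"
    "P holomorphic_on ball 0 1" "continuous_on (cball 0 1) P"
    unfolding H_def K_def P_def by (auto intro!: holomorphic_intros continuous_intros)
  have "P u * cnj (P u) = H u + cnj (K u)" if "norm u = 1" for u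
    unfolding H_add_cnj_K P_def cnj_sum sum_product
    by (intro sum.cong refl)
       (simp add: E_def unimodular_power_mult_cnj_power[OF that, symmetric] mult_ac)
  note P_comp = H2_norm_comp_inner[OF inner poly(5,6) poly(1,2) poly(3,4) this]
  show "in_H2 ((\<lambda>u. \<Sum>n<N. a n * u ^ n) \<circ> \<phi>)"
    using in_H2_comp_inner[OF inner poly(5,6)] by (simp add: P_def[abs_def])
  define q where "q = norm (\<phi> 0)"
  have q: "0 \<le> q" "q < 1"
    using inner_functionD(2)[OF inner, of 0] by (auto simp: q_def)
  have "H2_norm (P \<circ> \<phi>) ^ 2 = norm (complex_of_real (H2_norm (P \<circ> \<phi>) ^ 2))"
    by (simp only: norm_of_real abs_power2)
  also have "\<dots> = norm (H (\<phi> 0) + cnj (K (\<phi> 0)))"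
    by (simp only: P_comp)
  also have "\<dots> \<le> (\<Sum>n<N. \<Sum>m<N. norm (a n) * norm (a m) * q ^ (max n m - min n m))"
    unfolding H_add_cnj_K
    by (intro order_trans[OF norm_sum] sum_mono)
       (simp add: E_def norm_mult norm_power q_def max_def min_def)
  also have "\<dots> \<le> (1 + q) / (1 - q) * (\<Sum>n<N. norm (a n) ^ 2)"
    by (rule quadratic_form_power_dist_le[OF q])
  finally show "H2_norm ((\<lambda>u. \<Sum>n<N. a n * u ^ n) \<circ> \<phi>) ^ 2
      \<le> (1 + norm (\<phi> 0)) / (1 - norm (\<phi> 0)) * (\<Sum>n<N. norm (a n) ^ 2)"
    by (simp add: P_def[abs_def] q_def)
qed

lemma Re_circle_integral_norm_square_le:
  assumes f: "in_H2 f" and r: "0 \<le> r" "r < 1"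
  shows "Re (circle_integral (\<lambda>z. f z * cnj (f z)) r) \<le> 2 * pi * H2_norm f ^ 2"
proof -
  have hol: "f holomorphic_on ball 0 1" and sf: "summable (\<lambda>n. norm (taylor_coeff f n) ^ 2)"
    using f by (auto simp: in_H2_def)
  have "(\<Sum>n. norm (taylor_coeff f n) ^ 2 * r ^ (2*n)) \<le> (\<Sum>n. norm (taylor_coeff f n) ^ 2)"
    using r by (intro suminf_le summable_norm_taylor_coeff_square[OF hol] sf)
      (auto intro!: mult_left_le power_le_one)
  then show ?thesis
    using circle_integral_norm_square[OF hol r] H2_norm_square[OF f] by simp
qed

lemma circle_image_in_subdisc:
  fixes \<psi> :: "complex \<Rightarrow> complex"
  assumes \<psi>: "continuous_on (ball 0 1) \<psi>" "\<And>z. norm z < 1 \<Longrightarrow> norm (\<psi> z) < 1"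
    and r: "0 \<le> r" "r < 1"
  obtains \<rho> where "\<rho> < 1" "\<And>t. norm (\<psi> (of_real r * cis t)) \<le> \<rho>"
proof -
  have "continuous_on (cball 0 r) (\<lambda>z. norm (\<psi> z))"
    using r by (intro continuous_on_norm continuous_on_subset[OF \<psi>(1)]) auto
  from continuous_attains_sup[OF compact_cball _ this]
  obtain z0 where z0: "z0 \<in> cball 0 r" "\<And>z. z \<in> cball 0 r \<Longrightarrow> norm (\<psi> z) \<le> norm (\<psi> z0)"
    using r by auto
  show ?thesis
  proof
    show "norm (\<psi> z0) < 1"
      using \<psi>(2)[of z0] z0(1) r by auto
    show "norm (\<psi> (of_real r * cis t)) \<le> norm (\<psi> z0)" for t
      using z0(2)[of "of_real r * cis t"] r by (simp add: norm_mult)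
  qed
qed

lemma circle_integral_partial_sums_comp_tendsto:
  fixes f \<psi> :: "complex \<Rightarrow> complex"
  assumes f: "f holomorphic_on ball 0 1"
    and \<psi>: "continuous_on (ball 0 1) \<psi>" "\<And>z. norm z < 1 \<Longrightarrow> norm (\<psi> z) < 1"
    and r: "0 \<le> r" "r < 1"
  shows "(\<lambda>N. circle_integral (\<lambda>z. (\<Sum>n<N. taylor_coeff f n * \<psi> z ^ n)
                               * cnj (\<Sum>n<N. taylor_coeff f n * \<psi> z ^ n)) r)
           \<longlonglongrightarrow> circle_integral (\<lambda>z. f (\<psi> z) * cnj (f (\<psi> z))) r"
proof -
  define P where "P N u = (\<Sum>n<N. taylor_coeff f n * u ^ n)" for N u
  obtain \<rho> where \<rho>: "\<rho> < 1" and on_circle: "\<And>t. norm (\<psi> (of_real r * cis t)) \<le> \<rho>"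
    using circle_image_in_subdisc[OF \<psi> r] by blast
  define A where "A = (\<Sum>n. norm (taylor_coeff f n) * \<rho> ^ n)"
  have P_bound: "norm (P N (\<psi> (of_real r * cis t))) \<le> A" for N t
    unfolding P_def A_def by (rule norm_taylor_partial_sum_le[OF f on_circle \<rho>])
  have circle: "continuous_on {0..2*pi} (\<lambda>t. g (\<psi> (of_real r * cis t)))"
    if "continuous_on (ball 0 1) g" for g :: "complex \<Rightarrow> complex"
    using continuous_on_circle[OF continuous_on_compose2[OF that \<psi>(1)] r] \<psi>(2)
    by (simp add: image_subset_iff)
  have "(\<lambda>N. integral {0..2*pi} (\<lambda>t. P N (\<psi> (of_real r * cis t)) * cnj (P N (\<psi> (of_real r * cis t)))))
      \<longlonglongrightarrow> integral {0..2*pi} (\<lambda>t. f (\<psi> (of_real r * cis t)) * cnj (f (\<psi> (of_real r * cis t))))"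
  proof (rule integral_bounded_convergence_AE[where B="A * A"])
    show "continuous_on {0..2*pi}
        (\<lambda>t. P N (\<psi> (of_real r * cis t)) * cnj (P N (\<psi> (of_real r * cis t))))" for N
      by (intro continuous_intros circle) (auto simp: P_def intro!: continuous_intros)
    show "continuous_on {0..2*pi} (\<lambda>t. f (\<psi> (of_real r * cis t)) * cnj (f (\<psi> (of_real r * cis t))))"
      by (intro continuous_intros circle holomorphic_on_imp_continuous_on f)
    show "norm (P N (\<psi> (of_real r * cis t)) * cnj (P N (\<psi> (of_real r * cis t)))) \<le> A * A" for N t
      unfolding norm_mult complex_mod_cnj
      by (intro mult_mono P_bound) (auto intro: order_trans[OF norm_ge_zero P_bound])
    have "(\<lambda>N. P N (\<psi> (of_real r * cis t))) \<longlonglongrightarrow> f (\<psi> (of_real r * cis t))" for t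
      using taylor_coeff_sums[OF f] on_circle[of t] \<rho> by (simp add: P_def sums_def)
    then show "AE t in lborel. t \<in> {0..2*pi} \<longrightarrow>
        (\<lambda>N. P N (\<psi> (of_real r * cis t)) * cnj (P N (\<psi> (of_real r * cis t))))
          \<longlonglongrightarrow> f (\<psi> (of_real r * cis t)) * cnj (f (\<psi> (of_real r * cis t)))"
      by (intro AE_I2 impI tendsto_intros)
  qed
  then show ?thesis
    by (simp add: circle_integral_def P_def)
qed

lemma circle_sum_comp_inner_le:
  assumes inner: "inner_function \<phi>" and f: "in_H2 f" and r: "0 < r" "r < 1"
  shows "(\<Sum>n. norm (taylor_coeff (f \<circ> \<phi>) n) ^ 2 * r ^ (2*n))
           \<le> (1 + norm (\<phi> 0)) / (1 - norm (\<phi> 0)) * H2_norm f ^ 2"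
proof -
  define C where "C = (1 + norm (\<phi> 0)) / (1 - norm (\<phi> 0))"
  have C: "0 \<le> C"
    using inner_functionD(2)[OF inner, of 0] by (simp add: C_def)
  have hol_f: "f holomorphic_on ball 0 1" and sf: "summable (\<lambda>n. norm (taylor_coeff f n) ^ 2)"
    using f by (auto simp: in_H2_def)
  have hol: "f \<circ> \<phi> holomorphic_on ball 0 1"
    by (rule holomorphic_on_comp_inner[OF inner hol_f])
  define P where "P N = (\<lambda>u. \<Sum>n<N. taylor_coeff f n * u ^ n)" for N
  have "Re (circle_integral (\<lambda>z. (P N \<circ> \<phi>) z * cnj ((P N \<circ> \<phi>) z)) r)
      \<le> 2*pi * (C * H2_norm f ^ 2)" for N
  proof -
    have "Re (circle_integral (\<lambda>z. (P N \<circ> \<phi>) z * cnj ((P N \<circ> \<phi>) z)) r)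
        \<le> 2*pi * H2_norm (P N \<circ> \<phi>) ^ 2"
      using r unfolding P_def
      by (intro Re_circle_integral_norm_square_le H2_norm_poly_comp_inner_le(1)[OF inner]) auto
    also have "\<dots> \<le> 2*pi * (C * (\<Sum>n<N. norm (taylor_coeff f n) ^ 2))"
      unfolding P_def C_def by (intro mult_left_mono H2_norm_poly_comp_inner_le(2)[OF inner]) simp
    also have "\<dots> \<le> 2*pi * (C * H2_norm f ^ 2)"
      unfolding H2_norm_square[OF f] using C sf by (intro mult_left_mono sum_le_suminf) auto
    finally show ?thesis .
  qed
  moreover have "(\<lambda>N. Re (circle_integral (\<lambda>z. (P N \<circ> \<phi>) z * cnj ((P N \<circ> \<phi>) z)) r))
      \<longlonglongrightarrow> Re (circle_integral (\<lambda>z. (f \<circ> \<phi>) z * cnj ((f \<circ> \<phi>) z)) r)"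
    using circle_integral_partial_sums_comp_tendsto[OF hol_f
        holomorphic_on_imp_continuous_on[OF inner_functionD(1)[OF inner]] inner_functionD(2)[OF inner]] r
    by (intro tendsto_Re) (simp add: P_def o_def)
  ultimately have "Re (circle_integral (\<lambda>z. (f \<circ> \<phi>) z * cnj ((f \<circ> \<phi>) z)) r)
      \<le> 2*pi * (C * H2_norm f ^ 2)"
    by (intro LIMSEQ_le_const2) auto
  then have "(\<Sum>n. norm (taylor_coeff (f \<circ> \<phi>) n) ^ 2 * r ^ (2*n)) \<le> C * H2_norm f ^ 2"
    using circle_integral_norm_square[OF hol, of r] r by simp
  then show ?thesis
    by (simp only: C_def)
qed

lemma H2_norm_comp_inner_le:
  assumes inner: "inner_function \<phi>" and f: "in_H2 f"
  shows "in_H2 (f \<circ> \<phi>)"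
    and "H2_norm (f \<circ> \<phi>) \<le> sqrt ((1 + norm (\<phi> 0)) / (1 - norm (\<phi> 0))) * H2_norm f"
proof -
  define C where "C = (1 + norm (\<phi> 0)) / (1 - norm (\<phi> 0))"
  have "f \<circ> \<phi> holomorphic_on ball 0 1"
    using f unfolding in_H2_def by (intro holomorphic_on_comp_inner[OF inner]) simp
  from in_H2_of_circle_bound[OF this circle_sum_comp_inner_le[OF inner f]]
  have comp: "in_H2 (f \<circ> \<phi>)" and square: "H2_norm (f \<circ> \<phi>) ^ 2 \<le> C * H2_norm f ^ 2"
    by (simp_all add: C_def)
  have "H2_norm (f \<circ> \<phi>) = sqrt (H2_norm (f \<circ> \<phi>) ^ 2)"
    using H2_norm_nonneg[OF comp] by simp
  also have "\<dots> \<le> sqrt (C * H2_norm f ^ 2)"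
    using square by (rule real_sqrt_le_mono)
  also have "\<dots> = sqrt C * H2_norm f"
    using H2_norm_nonneg[OF f] by (simp add: real_sqrt_mult)
  finally show "H2_norm (f \<circ> \<phi>) \<le> sqrt ((1 + norm (\<phi> 0)) / (1 - norm (\<phi> 0))) * H2_norm f"
    unfolding C_def .
  show "in_H2 (f \<circ> \<phi>)"
    by (fact comp)
qed

lemma H2_norm_cmult:
  assumes g: "in_H2 g"
  shows "in_H2 (\<lambda>z. c * g z)" and "H2_norm (\<lambda>z. c * g z) = norm c * H2_norm g"
proof -
  have hol: "g holomorphic_on ball 0 1" and sg: "summable (\<lambda>n. norm (taylor_coeff g n) ^ 2)"
    using g by (auto simp: in_H2_def)
  have "taylor_coeff (\<lambda>z. c * g z) n = c * taylor_coeff g n" for n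
    using higher_deriv_cmult[OF hol, of 0 n c] by (simp add: taylor_coeff_def)
  then have coeff: "norm (taylor_coeff (\<lambda>z. c * g z) n) ^ 2 = norm c ^ 2 * norm (taylor_coeff g n) ^ 2" for n
    by (simp add: norm_mult power_mult_distrib)
  show "in_H2 (\<lambda>z. c * g z)"
    using hol sg unfolding in_H2_def coeff by (auto intro!: holomorphic_intros summable_mult)
  show "H2_norm (\<lambda>z. c * g z) = norm c * H2_norm g"
    unfolding H2_norm_def coeff suminf_mult[OF sg] by (simp add: real_sqrt_mult)
qed

lemma comp_op_norm_eqI:
  fixes \<phi> :: "complex \<Rightarrow> complex" and g :: "nat \<Rightarrow> complex \<Rightarrow> complex"
  assumes bound:
      "\<And>f. in_H2 f \<Longrightarrow> in_H2 (comp_op \<phi> f) \<and> H2_norm (comp_op \<phi> f) \<le> M * H2_norm f"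
    and g: "\<And>n. in_H2 (g n)" "\<And>n. H2_norm (g n) \<noteq> 0"
    and lim: "(\<lambda>n. H2_norm (comp_op \<phi> (g n)) / H2_norm (g n)) \<longlonglongrightarrow> M"
  shows "comp_op_norm \<phi> = M"
proof -
  define S where "S = {H2_norm (comp_op \<phi> f) | f. in_H2 f \<and> H2_norm f \<le> 1}"
  have "0 \<le> M"
    using g bound by (intro LIMSEQ_le_const[OF lim]) (auto intro!: divide_nonneg_nonneg H2_norm_nonneg)
  then have upper: "x \<le> M" if "x \<in> S" for x
    using that bound unfolding S_def by (force intro: order_trans mult_left_le)
  have ratio_in_S: "H2_norm (comp_op \<phi> (g n)) / H2_norm (g n) \<in> S" for n
  proof -
    define c where "c = complex_of_real (1 / H2_norm (g n))"
    have norm_c: "norm c = 1 / H2_norm (g n)"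
      using H2_norm_nonneg[OF g(1)] unfolding c_def norm_of_real by simp
    have "comp_op \<phi> (\<lambda>z. c * g n z) = (\<lambda>z. c * comp_op \<phi> (g n) z)"
      by (simp add: comp_op_def o_def)
    then show ?thesis
      unfolding S_def
      using H2_norm_cmult[OF g(1), of c] H2_norm_cmult(2)[of "comp_op \<phi> (g n)" c] bound[OF g(1)] g(2)
      by (intro CollectI exI[of _ "\<lambda>z. c * g n z"]) (auto simp: norm_c)
  qed
  have "bdd_above S"
    using upper by (auto simp: bdd_above_def)
  have "Sup S \<le> M"
    using ratio_in_S upper by (intro cSup_least) auto
  moreover have "M \<le> Sup S"
    using cSup_upper[OF ratio_in_S \<open>bdd_above S\<close>] by (intro LIMSEQ_le_const2[OF lim]) auto
  ultimately show ?thesis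
    by (simp add: comp_op_norm_def S_def)
qed

lemma kernel_norm_ratio:
  assumes inner: "inner_function \<phi>" and w: "norm w < 1"
  shows "H2_norm (comp_op \<phi> (kernel w)) / H2_norm (kernel w)
           = sqrt ((1 - norm w ^ 2 * norm (\<phi> 0) ^ 2) / norm (1 - cnj w * \<phi> 0) ^ 2)"
proof -
  have "H2_norm (comp_op \<phi> (kernel w)) / H2_norm (kernel w)
      = sqrt (H2_norm (kernel w \<circ> \<phi>) ^ 2) / sqrt (H2_norm (kernel w) ^ 2)"
    using H2_norm_kernel_comp_inner(1)[OF inner w] H2_norm_kernel(1)[OF w]
    by (simp add: comp_op_def H2_norm_nonneg)
  also have "\<dots> = sqrt (H2_norm (kernel w \<circ> \<phi>) ^ 2 / H2_norm (kernel w) ^ 2)"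
    by (rule real_sqrt_divide[symmetric])
  also have "H2_norm (kernel w \<circ> \<phi>) ^ 2 / H2_norm (kernel w) ^ 2
      = (1 - norm w ^ 2 * norm (\<phi> 0) ^ 2) / norm (1 - cnj w * \<phi> 0) ^ 2"
  proof -
    have w2: "1 - norm w ^ 2 \<noteq> 0"
      using w by (simp add: abs_square_eq_1)
    have cancel: "x / (b * y) / (1 / b) = x / y" if "b \<noteq> 0" for b x y :: real
      using that by simp
    show ?thesis
      unfolding H2_norm_kernel_comp_inner(2)[OF inner w] H2_norm_kernel(2)[OF w] by (rule cancel[OF w2])
  qed
  finally show ?thesis .
qed

lemma kernel_norm_ratio_radial:
  assumes inner: "inner_function \<phi>" and p: "\<phi> 0 = of_real q * u"
    and u: "norm u = 1" and t: "\<bar>t\<bar> < 1"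
  shows "H2_norm (comp_op \<phi> (kernel (of_real t * u))) / H2_norm (kernel (of_real t * u))
           = sqrt ((1 + t * q) / (1 - t * q))"
proof -
  have norms: "norm (of_real t * u) = \<bar>t\<bar>" "norm (\<phi> 0) = \<bar>q\<bar>"
    using u p by (simp_all add: norm_mult)
  have "cnj u * u = 1"
    using u complex_norm_square[of u] by (simp add: mult.commute)
  then have tq: "1 - cnj (of_real t * u) * \<phi> 0 = of_real (1 - t * q)"
    by (simp add: p mult_ac)
  have "\<bar>t\<bar> * \<bar>q\<bar> < 1 * 1"
    using t inner_functionD(2)[OF inner, of 0] norms(2) by (intro mult_strict_mono) auto
  then have "1 - t * q > 0"
    by (simp add: abs_mult abs_less_iff flip: abs_mult)
  then have "norm (1 - cnj (of_real t * u) * \<phi> 0) = 1 - t * q"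
    unfolding tq norm_of_real by simp
  moreover have "1 - \<bar>t\<bar> ^ 2 * \<bar>q\<bar> ^ 2 = (1 + t * q) * (1 - t * q)"
    by (simp add: algebra_simps power2_eq_square)
  then have "(1 - \<bar>t\<bar> ^ 2 * \<bar>q\<bar> ^ 2) / (1 - t * q) ^ 2 = (1 + t * q) / (1 - t * q)"
    using \<open>1 - t * q > 0\<close> by (simp add: power2_eq_square)
  ultimately show ?thesis
    using t by (simp only: kernel_norm_ratio[OF inner] norms)
qed

lemma kernel_norm_ratio_radial_tendsto:
  assumes inner: "inner_function \<phi>" and p: "\<phi> 0 = of_real q * u" and u: "norm u = 1"
    and t: "\<And>n. \<bar>t n\<bar> < 1" "t \<longlonglongrightarrow> \<tau>" and \<tau>: "\<bar>\<tau>\<bar> \<le> 1"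
  shows "(\<lambda>n. H2_norm (comp_op \<phi> (kernel (of_real (t n) * u))) / H2_norm (kernel (of_real (t n) * u)))
           \<longlonglongrightarrow> sqrt ((1 + \<tau> * q) / (1 - \<tau> * q))"
proof -
  have "\<bar>q\<bar> < 1"
    using inner_functionD(2)[OF inner, of 0] p u by (simp add: norm_mult)
  then have "\<bar>\<tau> * q\<bar> < 1"
    using \<tau> mult_left_le_one_le[of "\<bar>q\<bar>" "\<bar>\<tau>\<bar>"] by (simp add: abs_mult)
  then have "1 - \<tau> * q \<noteq> 0"
    by auto
  then show ?thesis
    unfolding kernel_norm_ratio_radial[OF inner p u t(1)] by (intro tendsto_intros t(2))
qed

lemma disc_aut_radial:
  assumes "norm u = 1"
  shows "disc_aut (of_real q * u) (of_real t * u) = of_real ((q - t) / (1 - q * t)) * u"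
proof -
  have "cnj u * u = 1"
    using assms complex_norm_square[of u] by (simp add: mult.commute)
  then have "1 - cnj (of_real q * u) * (of_real t * u) = of_real (1 - q * t)"
    by (simp add: mult_ac)
  then show ?thesis
    by (simp add: disc_aut_def algebra_simps)
qed

lemma comp_op_norm_inner:
  assumes inner: "inner_function \<phi>"
  shows "comp_op_norm \<phi> = sqrt ((1 + norm (\<phi> 0)) / (1 - norm (\<phi> 0)))"
proof -
  define u where "u = (if \<phi> 0 = 0 then 1 else sgn (\<phi> 0))"
  define t where "t n = real n / real (Suc n)" for n
  have u: "norm u = 1" "\<phi> 0 = of_real (norm (\<phi> 0)) * u"
    by (auto simp: u_def sgn_eq norm_divide)
  have t: "\<bar>t n\<bar> < 1" for n
    by (simp add: t_def)
  have "t \<longlonglongrightarrow> 1"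
    unfolding t_def[abs_def] by (rule LIMSEQ_n_over_Suc_n)
  have "(\<lambda>n. H2_norm (comp_op \<phi> (kernel (of_real (t n) * u))) / H2_norm (kernel (of_real (t n) * u)))
      \<longlonglongrightarrow> sqrt ((1 + norm (\<phi> 0)) / (1 - norm (\<phi> 0)))"
    using kernel_norm_ratio_radial_tendsto[OF inner u(2,1) t \<open>t \<longlonglongrightarrow> 1\<close>] by simp
  then show ?thesis
  proof (rule comp_op_norm_eqI[rotated 3])
    show "in_H2 (comp_op \<phi> f) \<and>
        H2_norm (comp_op \<phi> f) \<le> sqrt ((1 + norm (\<phi> 0)) / (1 - norm (\<phi> 0))) * H2_norm f"
      if "in_H2 f" for f
      using H2_norm_comp_inner_le[OF inner that] by (simp add: comp_op_def)
    show "in_H2 (kernel (of_real (t n) * u))" "H2_norm (kernel (of_real (t n) * u)) \<noteq> 0" for n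
      using H2_norm_kernel[of "of_real (t n) * u"] t[of n] u by (auto simp: norm_mult abs_square_eq_1)
  qed
qed

theorem mainTheorem4:
  fixes \<phi> :: "complex \<Rightarrow> complex" and p :: complex and r :: "nat \<Rightarrow> real"
  assumes "inner_function \<phi>"
    and "\<phi> 0 = p" and "p \<noteq> 0"
    and "\<And>n. 0 < r n \<and> r n < 1"
    and "r \<longlonglongrightarrow> 1"
  defines "w \<equiv> (\<lambda>n. - (p / complex_of_real (norm p)) * complex_of_real (r n))"
  shows "((\<lambda>n. H2_norm (comp_op \<phi> (kernel (disc_aut p (w n)))) / H2_norm (kernel (disc_aut p (w n))))
            \<longlonglongrightarrow> sqrt ((1 + norm p) / (1 - norm p)) \<and>
           sqrt ((1 + norm p) / (1 - norm p)) = comp_op_norm \<phi> \<and>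
           (\<lambda>n. H2_norm (comp_op \<phi> (kernel (w n))) / H2_norm (kernel (w n)))
            \<longlonglongrightarrow> sqrt ((1 - norm p) / (1 + norm p)))"
proof -
  define q where "q = norm p"
  define u where "u = p / of_real q"
  define s where "s n = (q + r n) / (1 + q * r n)" for n
  have q: "0 < q" "q < 1"
    using assms(2,3) inner_functionD(2)[OF assms(1), of 0] by (auto simp: q_def)
  have u: "norm u = 1" and p: "\<phi> 0 = of_real q * u"
    using q by (simp_all add: u_def q_def assms(2) norm_divide)
  have w: "w n = of_real (- r n) * u" for n
    by (simp add: w_def u_def q_def)
  have v: "disc_aut p (w n) = of_real (s n) * u" for n
    unfolding w p[unfolded assms(2)] disc_aut_radial[OF u] by (simp add: s_def)
  have r: "\<bar>- r n\<bar> < 1" and s: "\<bar>s n\<bar> < 1" for n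
    using assms(4)[of n] q mult_pos_pos[of "1 - q" "1 - r n"] mult_pos_pos[of q "r n"]
    by (auto simp: s_def abs_less_iff pos_divide_less_eq algebra_simps)
  have "s \<longlonglongrightarrow> (q + 1) / (1 + q * 1)"
    unfolding s_def[abs_def] using q by (intro tendsto_intros assms(5)) auto
  then have "s \<longlonglongrightarrow> 1"
    using q by (simp add: add.commute)
  then have "(\<lambda>n. H2_norm (comp_op \<phi> (kernel (disc_aut p (w n)))) / H2_norm (kernel (disc_aut p (w n))))
      \<longlonglongrightarrow> sqrt ((1 + q) / (1 - q))"
    unfolding v using kernel_norm_ratio_radial_tendsto[OF assms(1) p u, of s 1] s by simp
  moreover have "(\<lambda>n. H2_norm (comp_op \<phi> (kernel (w n))) / H2_norm (kernel (w n)))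
      \<longlonglongrightarrow> sqrt ((1 - q) / (1 + q))"
    unfolding w using kernel_norm_ratio_radial_tendsto[OF assms(1) p u, of "\<lambda>n. - r n" "- 1"] r assms(5)
    by (simp add: tendsto_minus_cancel_left)
  ultimately show ?thesis
    using comp_op_norm_inner[OF assms(1)] by (simp add: q_def assms(2))
qed

end
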